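(* Let $c>0$ and $\lambda\in C^2((0,\infty))$. Let $f_{++},f_{+-},f_{-+},f_{--}$ be sufficiently smooth (say $C^4$) functions of $(x,y,t)\in\mathbb{R}^2\times(0,\infty)$ satisfying $$\begin{aligned} \partial_t f_{++}&=-\tfrac c2\partial_x f_{++}-\tfrac c2\partial_y f_{++}+\tfrac{\lambda(t)}{2}(f_{-+}+f_{+-}-2f_{++}),\\ \partial_t f_{+-}&=-\tfrac c2\partial_x f_{+-}+\tfrac c2\partial_y f_{+-}+\tfrac{\lambda(t)}{2}(f_{--}+f_{++}-2f_{+-}),\\ \partial_t f_{-+}&=\tfrac c2\partial_x f_{-+}-\tfrac c2\partial_y f_{-+}+\tfrac{\lambda(t)}{2}(f_{++}+f_{--}-2f_{-+}),\\ \partial_t f_{--}&=\tfrac c2\partial_x f_{--}+\tfrac c2\partial_y f_{--}+\tfrac{\lambda(t)}{2}(f_{+-}+f_{-+}-2f_{--}). \end{aligned}$$ Then $p=f_{++}+f_{+-}+f_{-+}+f_{--}$ satisfies $$\begin{aligned} \frac{\partial^4 p}{\partial t^4}=&-4\lambda\frac{\partial^3 p}{\partial t^3}+\Big(\frac{c^2}{2}\Delta-5\lambda^2-4\lambda'\Big)\frac{\partial^2 p}{\partial t^2}+\Big(\lambda c^2\Delta-5\lambda\lambda'-2\lambda^3-\lambda''\Big)\frac{\partial p}{\partial t}\\ &-\frac{c^4}{16}\Big(\frac{\partial^2}{\partial x^2}-\frac{\partial^2}{\partial y^2}\Big)^2p+\frac{c^2}{2}\big(\lambda^2+\lambda'\big)\Delta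 p, \end{aligned}$$ where $\lambda=\lambda(t)$, $\lambda'=\frac{d\lambda}{dt}$, $\lambda''=\frac{d^2\lambda}{dt^2}$ and $\Delta=\frac{\partial^2}{\partial x^2}+\frac{\partial^2}{\partial y^2}$.
   Context: Interpretation: $f_{ab}$ are the joint densities of the position of a planar particle moving with velocity components $\pm c/2$ in the four diagonal directions $(a\,b)\in\{(++),(+-),(-+),(--)\}$, switching at the events of a non-homogeneous Poisson process of rate $\lambda(t)$ to one of the two orthogonal directions with probability $1/2$ each; $p$ is then the (absolutely continuous part of the) density of the position. *)

theory Defs
  imports "HOL-Analysis.Analysis"
begin

definition pdx :: "(real \<Rightarrow> real \<Rightarrow> real \<Rightarrow> real) \<Rightarrow> real \<Rightarrow> real \<Rightarrow> real \<Rightarrow> real" where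
  "pdx f = (\<lambda>x y t. deriv (\<lambda>s. f s y t) x)"

definition pdy :: "(real \<Rightarrow> real \<Rightarrow> real \<Rightarrow> real) \<Rightarrow> real \<Rightarrow> real \<Rightarrow> real \<Rightarrow> real" where
  "pdy f = (\<lambda>x y t. deriv (\<lambda>s. f x s t) y)"

definition pdt :: "(real \<Rightarrow> real \<Rightarrow> real \<Rightarrow> real) \<Rightarrow> real \<Rightarrow> real \<Rightarrow> real \<Rightarrow> real" where
  "pdt f = (\<lambda>x y t. deriv (\<lambda>s. f x y s) t)"

definition partials_exist :: "(real \<Rightarrow> real \<Rightarrow> real \<Rightarrow> real) \<Rightarrow> real \<Rightarrow> real \<Rightarrow> real \<Rightarrow> bool" where
  "partials_exist f x y t \<longleftrightarrow>
     (\<lambda>s. f s y t) differentiable (at x) \<and>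
     (\<lambda>s. f x s t) differentiable (at y) \<and>
     (\<lambda>s. f x y s) differentiable (at t)"

fun Ck_on :: "nat \<Rightarrow> (real \<Rightarrow> real \<Rightarrow> real \<Rightarrow> real) \<Rightarrow> (real \<times> real \<times> real) set \<Rightarrow> bool" where
  "Ck_on 0 f S = continuous_on S (\<lambda>(x, y, t). f x y t)"
| "Ck_on (Suc k) f S =
     (continuous_on S (\<lambda>(x, y, t). f x y t) \<and>
      (\<forall>(x, y, t) \<in> S. partials_exist f x y t) \<and>
      Ck_on k (pdx f) S \<and> Ck_on k (pdy f) S \<and> Ck_on k (pdt f) S)"

fun Ck_on1 :: "nat \<Rightarrow> (real \<Rightarrow> real) \<Rightarrow> real set \<Rightarrow> bool" where
  "Ck_on1 0 g S = continuous_on S g"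
| "Ck_on1 (Suc k) g S =
     (continuous_on S g \<and> (\<forall>t\<in>S. g differentiable (at t)) \<and> Ck_on1 k (deriv g) S)"

definition lap :: "(real \<Rightarrow> real \<Rightarrow> real \<Rightarrow> real) \<Rightarrow> real \<Rightarrow> real \<Rightarrow> real \<Rightarrow> real" where
  "lap f = (\<lambda>x y t. pdx (pdx f) x y t + pdy (pdy f) x y t)"

definition hyp_op :: "(real \<Rightarrow> real \<Rightarrow> real \<Rightarrow> real) \<Rightarrow> real \<Rightarrow> real \<Rightarrow> real \<Rightarrow> real" where
  "hyp_op f = (\<lambda>x y t. pdx (pdx f) x y t - pdy (pdy f) x y t)"

end

theory Submission
  imports Defs
begin

text \<open>
  Pass to the sums and differences \<open>p, r, s, q\<close> of the four densities (the signs of the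
  \<open>x\<close>- and \<open>y\<close>-velocities and their product). With \<open>a = c/2\<close> the system becomes
  \<open>p\<^sub>t = -a(r\<^sub>x + s\<^sub>y)\<close>, \<open>r\<^sub>t = -a(p\<^sub>x + q\<^sub>y) - \<lambda>r\<close>,
  \<open>s\<^sub>t = -a(p\<^sub>y + q\<^sub>x) - \<lambda>s\<close>, \<open>q\<^sub>t = -a(s\<^sub>x + r\<^sub>y) - 2\<lambda>q\<close>.
  Differentiating the first equation once more gives
  \<open>P := p\<^sub>t\<^sub>t + \<lambda>p\<^sub>t - a\<^sup>2\<Delta>p = 2a\<^sup>2q\<^sub>x\<^sub>y\<close>, and two further time derivatives
  of \<open>Q = q\<^sub>x\<^sub>y\<close>, in which \<open>W = (s\<^sub>x + r\<^sub>y)\<^sub>x\<^sub>y\<close> cancels, yield the damped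
  wave equation \<open>P\<^sub>t\<^sub>t + 3\<lambda>P\<^sub>t + 2(\<lambda>\<^sup>2 + \<lambda>')P - a\<^sup>2\<Delta>P = 4a\<^sup>4p\<^sub>x\<^sub>x\<^sub>y\<^sub>y\<close>.
  Expanding \<open>P\<close> and using \<open>(\<partial>\<^sub>x\<^sup>2 - \<partial>\<^sub>y\<^sup>2)\<^sup>2 = \<Delta>\<^sup>2 - 4\<partial>\<^sub>x\<^sup>2\<partial>\<^sub>y\<^sup>2\<close>
  gives the fourth-order equation. The only analysis involved is the symmetry of mixed second
  partial derivatives of \<open>C\<^sup>2\<close> functions.
\<close>

section \<open>Symmetry of mixed partial derivatives\<close>

lemma partial_difference_eq_integral:
  fixes g gu gv guv :: "real \<Rightarrow> real \<Rightarrow> real" and u v d u' :: real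
  assumes d: "d > 0"
    and gu: "\<And>a b. \<bar>a - u\<bar> < d \<Longrightarrow> \<bar>b - v\<bar> < d \<Longrightarrow> ((\<lambda>s. g s b) has_real_derivative gu a b) (at a)"
    and gv: "\<And>a b. \<bar>a - u\<bar> < d \<Longrightarrow> \<bar>b - v\<bar> < d \<Longrightarrow> ((\<lambda>s. g a s) has_real_derivative gv a b) (at b)"
    and guv: "\<And>a b. \<bar>a - u\<bar> < d \<Longrightarrow> \<bar>b - v\<bar> < d \<Longrightarrow> ((\<lambda>s. gu a s) has_real_derivative guv a b) (at b)"
    and cont: "continuous_on ({u-d<..<u+d} \<times> {v-d<..<v+d}) (\<lambda>(a, b). guv a b)"
    and u': "u' \<in> {u - d/2..u + d/2}"
  shows "gv u' v - gv (u - d/2) v = integral {u - d/2..u'} (\<lambda>w. guv w v)"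
proof -
  define a0 where "a0 = u - d/2"
  define U where "U = {v - d/2<..<v + d/2}"
  have near_u: "\<bar>w - u\<bar> < d" if "w \<in> {a0..u'}" for w
    using that u' d by (auto simp: a0_def)
  have near_v: "\<bar>b - v\<bar> < d" if "b \<in> U" for b
    using that d by (auto simp: U_def)
  have U: "v \<in> U" "open U" "convex U"
    using d by (auto simp: U_def)
  have ftc: "((\<lambda>w. gu w b) has_integral (g u' b - g a0 b)) {a0..u'}" if b: "\<bar>b - v\<bar> < d" for b
  proof (rule fundamental_theorem_of_calculus)
    show "a0 \<le> u'" using u' by (simp add: a0_def)
    fix w assume "w \<in> {a0..u'}"
    then have "((\<lambda>s. g s b) has_real_derivative gu w b) (at w within {a0..u'})"
      using gu[OF near_u b] has_field_derivative_at_within by blast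
    then show "((\<lambda>s. g s b) has_vector_derivative gu w b) (at w within {a0..u'})"
      by (simp add: has_real_derivative_iff_has_vector_derivative)
  qed
  have "((\<lambda>b. integral (cbox a0 u') (\<lambda>w. gu w b)) has_field_derivative
          integral (cbox a0 u') (\<lambda>w. guv w v)) (at v within U)"
  proof (rule leibniz_rule_field_derivative[where fx="\<lambda>b w. guv w b"])
    fix b w assume "b \<in> U" "w \<in> cbox a0 u'"
    then show "((\<lambda>b. gu w b) has_field_derivative guv w b) (at b within U)"
      using guv[OF near_u near_v] by (auto intro: has_field_derivative_at_within)
  next
    fix b assume "b \<in> U"
    then show "(\<lambda>w. gu w b) integrable_on cbox a0 u'"
      using ftc[OF near_v] by (auto simp: integrable_on_def)
  next
    have "(\<lambda>z. (snd z, fst z)) ` (U \<times> cbox a0 u') \<subseteq> {u-d<..<u+d} \<times> {v-d<..<v+d}"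
      using near_u near_v by force
    then have "continuous_on (U \<times> cbox a0 u') ((\<lambda>(a, b). guv a b) \<circ> (\<lambda>z. (snd z, fst z)))"
      by (intro continuous_on_compose continuous_intros continuous_on_subset[OF cont])
    then show "continuous_on (U \<times> cbox a0 u') (\<lambda>(b, w). guv w b)"
      by (simp add: o_def case_prod_beta)
  qed (use U in auto)
  then have leibniz: "((\<lambda>b. integral {a0..u'} (\<lambda>w. gu w b)) has_field_derivative
                        integral {a0..u'} (\<lambda>w. guv w v)) (at v)"
    using U at_within_open by (metis box_real(2))
  have "((\<lambda>b. g u' b - g a0 b) has_field_derivative gv u' v - gv a0 v) (at v)"
    using near_u u' d by (intro DERIV_diff gv) (auto simp: a0_def)
  then have "((\<lambda>b. integral {a0..u'} (\<lambda>w. gu w b)) has_field_derivative gv u' v - gv a0 v) (at v)"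
    by (rule has_field_derivative_transform_within_open[OF _ U(2,1)])
       (use ftc near_v in \<open>auto intro: integral_unique[symmetric]\<close>)
  then show ?thesis
    using DERIV_unique[OF _ leibniz] by (simp add: a0_def)
qed

lemma mixed_partials_commute:
  fixes g gu gv guv :: "real \<Rightarrow> real \<Rightarrow> real" and u v d :: real
  assumes d: "d > 0"
    and gu: "\<And>a b. \<bar>a - u\<bar> < d \<Longrightarrow> \<bar>b - v\<bar> < d \<Longrightarrow> ((\<lambda>s. g s b) has_real_derivative gu a b) (at a)"
    and gv: "\<And>a b. \<bar>a - u\<bar> < d \<Longrightarrow> \<bar>b - v\<bar> < d \<Longrightarrow> ((\<lambda>s. g a s) has_real_derivative gv a b) (at b)"
    and guv: "\<And>a b. \<bar>a - u\<bar> < d \<Longrightarrow> \<bar>b - v\<bar> < d \<Longrightarrow> ((\<lambda>s. gu a s) has_real_derivative guv a b) (at b)"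
    and cont: "continuous_on ({u-d<..<u+d} \<times> {v-d<..<v+d}) (\<lambda>(a, b). guv a b)"
  shows "((\<lambda>s. gv s v) has_real_derivative guv u v) (at u)"
proof -
  define a0 where "a0 = u - d/2"
  define e where "e = u + d/2"
  have "(\<lambda>w. (w, v)) ` {a0..e} \<subseteq> {u-d<..<u+d} \<times> {v-d<..<v+d}"
    using d by (auto simp: a0_def e_def)
  then have "continuous_on {a0..e} ((\<lambda>(a, b). guv a b) \<circ> (\<lambda>w. (w, v)))"
    by (intro continuous_on_compose continuous_intros continuous_on_subset[OF cont])
  then have "((\<lambda>s. integral {a0..s} (\<lambda>w. guv w v)) has_vector_derivative guv u v) (at u within {a0..e})"
    using integral_has_vector_derivative[of a0 e "\<lambda>w. guv w v" u] d by (simp add: o_def a0_def e_def)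
  then have "((\<lambda>s. gv a0 v + integral {a0..s} (\<lambda>w. guv w v)) has_real_derivative guv u v) (at u)"
    using d by (auto simp: a0_def e_def at_within_Icc_at has_real_derivative_iff_has_vector_derivative[symmetric]
                     intro!: derivative_eq_intros)
  then show ?thesis
  proof (rule has_field_derivative_transform_within_open[of _ _ _ "{a0<..<e}"])
    fix s assume "s \<in> {a0<..<e}"
    then show "gv a0 v + integral {a0..s} (\<lambda>w. guv w v) = gv s v"
      using partial_difference_eq_integral[OF assms, of s] by (simp add: a0_def e_def)
  qed (use d in \<open>auto simp: a0_def e_def\<close>)
qed

section \<open>Partial derivatives on the upper half-space\<close>

abbreviation upper :: "(real \<times> real \<times> real) set" where
  "upper \<equiv> UNIV \<times> UNIV \<times> {0<..}"

definition eq_on_upper ::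
    "(real \<Rightarrow> real \<Rightarrow> real \<Rightarrow> real) \<Rightarrow> (real \<Rightarrow> real \<Rightarrow> real \<Rightarrow> real) \<Rightarrow> bool" where
  "eq_on_upper f g \<longleftrightarrow> (\<forall>x y t. 0 < t \<longrightarrow> f x y t = g x y t)"

lemma eq_on_upperI: "(\<And>x y t. 0 < t \<Longrightarrow> f x y t = g x y t) \<Longrightarrow> eq_on_upper f g"
  by (simp add: eq_on_upper_def)

lemma eq_on_upperD: "eq_on_upper f g \<Longrightarrow> 0 < t \<Longrightarrow> f x y t = g x y t"
  by (simp add: eq_on_upper_def)

lemma eq_on_upper_trans: "eq_on_upper f g \<Longrightarrow> eq_on_upper g h \<Longrightarrow> eq_on_upper f h"
  by (simp add: eq_on_upper_def)

lemma eq_on_upper_pdx: "eq_on_upper f g \<Longrightarrow> eq_on_upper (pdx f) (pdx g)"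
  by (simp add: eq_on_upper_def pdx_def)

lemma eq_on_upper_pdy: "eq_on_upper f g \<Longrightarrow> eq_on_upper (pdy f) (pdy g)"
  by (simp add: eq_on_upper_def pdy_def)

lemma eq_on_upper_pdt:
  assumes "eq_on_upper f g"
  shows "eq_on_upper (pdt f) (pdt g)"
proof (rule eq_on_upperI)
  fix x y t :: real assume "0 < t"
  then have "\<forall>\<^sub>F s in nhds t. f x y s = g x y s"
    using assms unfolding eventually_nhds eq_on_upper_def by (intro exI[of _ "{0<..}"]) auto
  then show "pdt f x y t = pdt g x y t"
    unfolding pdt_def by (rule deriv_cong_ev) simp
qed

lemma partials_exist_cong_upper:
  assumes "eq_on_upper f g" "0 < t" "partials_exist f x y t"
  shows "partials_exist g x y t"
proof -
  have "(\<lambda>s. f s y t) = (\<lambda>s. g s y t)" "(\<lambda>s. f x s t) = (\<lambda>s. g x s t)"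
    using assms(1,2) by (auto simp: eq_on_upper_def)
  moreover have "((\<lambda>s. g x y s) has_real_derivative pdt f x y t) (at t)"
  proof (rule has_field_derivative_transform_within_open[of "\<lambda>s. f x y s" _ _ "{0<..}"])
    show "((\<lambda>s. f x y s) has_real_derivative pdt f x y t) (at t)"
      using assms(3) by (simp add: partials_exist_def pdt_def DERIV_deriv_iff_real_differentiable)
  qed (use assms(1,2) in \<open>auto simp: eq_on_upper_def\<close>)
  ultimately show ?thesis
    using assms(3) real_differentiable_def unfolding partials_exist_def by metis
qed

lemma has_real_derivative_pdx: "partials_exist f x y t \<Longrightarrow> ((\<lambda>s. f s y t) has_real_derivative pdx f x y t) (at x)"
  by (simp add: partials_exist_def pdx_def DERIV_deriv_iff_real_differentiable)

lemma has_real_derivative_pdy: "partials_exist f x y t \<Longrightarrow> ((\<lambda>s. f x s t) has_real_derivative pdy f x y t) (at y)"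
  by (simp add: partials_exist_def pdy_def DERIV_deriv_iff_real_differentiable)

lemma has_real_derivative_pdt: "partials_exist f x y t \<Longrightarrow> ((\<lambda>s. f x y s) has_real_derivative pdt f x y t) (at t)"
  by (simp add: partials_exist_def pdt_def DERIV_deriv_iff_real_differentiable)

lemma partials_exist_add [simp]:
  "partials_exist f x y t \<Longrightarrow> partials_exist g x y t \<Longrightarrow> partials_exist (\<lambda>x y t. f x y t + g x y t) x y t"
  by (simp add: partials_exist_def differentiable_add)

lemma partials_exist_diff [simp]:
  "partials_exist f x y t \<Longrightarrow> partials_exist g x y t \<Longrightarrow> partials_exist (\<lambda>x y t. f x y t - g x y t) x y t"
  by (simp add: partials_exist_def differentiable_diff)

lemma partials_exist_minus [simp]:
  "partials_exist f x y t \<Longrightarrow> partials_exist (\<lambda>x y t. - f x y t) x y t"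
  by (simp add: partials_exist_def differentiable_minus)

lemma partials_exist_mult [simp]:
  "h differentiable (at t) \<Longrightarrow> partials_exist f x y t \<Longrightarrow> partials_exist (\<lambda>x y t. h t * f x y t) x y t"
  by (simp add: partials_exist_def differentiable_mult)

lemma pdx_add [simp]:
  "partials_exist f x y t \<Longrightarrow> partials_exist g x y t \<Longrightarrow>
    pdx (\<lambda>x y t. f x y t + g x y t) x y t = pdx f x y t + pdx g x y t"
  unfolding pdx_def by (intro DERIV_imp_deriv DERIV_add has_real_derivative_pdx[unfolded pdx_def])

lemma pdx_diff [simp]:
  "partials_exist f x y t \<Longrightarrow> partials_exist g x y t \<Longrightarrow>
    pdx (\<lambda>x y t. f x y t - g x y t) x y t = pdx f x y t - pdx g x y t"
  unfolding pdx_def by (intro DERIV_imp_deriv DERIV_diff has_real_derivative_pdx[unfolded pdx_def])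

lemma pdx_minus [simp]: "partials_exist f x y t \<Longrightarrow> pdx (\<lambda>x y t. - f x y t) x y t = - pdx f x y t"
  unfolding pdx_def by (intro DERIV_imp_deriv DERIV_minus has_real_derivative_pdx[unfolded pdx_def])

lemma pdx_mult [simp]: "partials_exist f x y t \<Longrightarrow> pdx (\<lambda>x y t. h t * f x y t) x y t = h t * pdx f x y t"
  unfolding pdx_def by (intro DERIV_imp_deriv DERIV_cmult has_real_derivative_pdx[unfolded pdx_def])

lemma pdy_add [simp]:
  "partials_exist f x y t \<Longrightarrow> partials_exist g x y t \<Longrightarrow>
    pdy (\<lambda>x y t. f x y t + g x y t) x y t = pdy f x y t + pdy g x y t"
  unfolding pdy_def by (intro DERIV_imp_deriv DERIV_add has_real_derivative_pdy[unfolded pdy_def])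

lemma pdy_diff [simp]:
  "partials_exist f x y t \<Longrightarrow> partials_exist g x y t \<Longrightarrow>
    pdy (\<lambda>x y t. f x y t - g x y t) x y t = pdy f x y t - pdy g x y t"
  unfolding pdy_def by (intro DERIV_imp_deriv DERIV_diff has_real_derivative_pdy[unfolded pdy_def])

lemma pdy_minus [simp]: "partials_exist f x y t \<Longrightarrow> pdy (\<lambda>x y t. - f x y t) x y t = - pdy f x y t"
  unfolding pdy_def by (intro DERIV_imp_deriv DERIV_minus has_real_derivative_pdy[unfolded pdy_def])

lemma pdy_mult [simp]: "partials_exist f x y t \<Longrightarrow> pdy (\<lambda>x y t. h t * f x y t) x y t = h t * pdy f x y t"
  unfolding pdy_def by (intro DERIV_imp_deriv DERIV_cmult has_real_derivative_pdy[unfolded pdy_def])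

lemma pdt_add [simp]:
  "partials_exist f x y t \<Longrightarrow> partials_exist g x y t \<Longrightarrow>
    pdt (\<lambda>x y t. f x y t + g x y t) x y t = pdt f x y t + pdt g x y t"
  unfolding pdt_def by (intro DERIV_imp_deriv DERIV_add has_real_derivative_pdt[unfolded pdt_def])

lemma pdt_diff [simp]:
  "partials_exist f x y t \<Longrightarrow> partials_exist g x y t \<Longrightarrow>
    pdt (\<lambda>x y t. f x y t - g x y t) x y t = pdt f x y t - pdt g x y t"
  unfolding pdt_def by (intro DERIV_imp_deriv DERIV_diff has_real_derivative_pdt[unfolded pdt_def])

lemma pdt_minus [simp]: "partials_exist f x y t \<Longrightarrow> pdt (\<lambda>x y t. - f x y t) x y t = - pdt f x y t"
  unfolding pdt_def by (intro DERIV_imp_deriv DERIV_minus has_real_derivative_pdt[unfolded pdt_def])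

lemma pdt_mult [simp]:
  assumes "h differentiable (at t)" "partials_exist f x y t"
  shows "pdt (\<lambda>x y t. h t * f x y t) x y t = deriv h t * f x y t + h t * pdt f x y t"
proof -
  have "((\<lambda>s. h s * f x y s) has_real_derivative deriv h t * f x y t + h t * pdt f x y t) (at t)"
    using DERIV_mult[OF _ has_real_derivative_pdt[OF assms(2)], of h "deriv h t"] assms(1)
    by (simp add: DERIV_deriv_iff_real_differentiable mult.commute)
  then show ?thesis
    unfolding pdt_def by (rule DERIV_imp_deriv)
qed

section \<open>Smoothness classes\<close>

lemma Ck_on_continuous: "Ck_on k f S \<Longrightarrow> continuous_on S (\<lambda>(x, y, t). f x y t)"
  by (cases k) auto

lemma Ck_on_le: "Ck_on k f S \<Longrightarrow> j \<le> k \<Longrightarrow> Ck_on j f S"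
proof (induction k arbitrary: f j)
  case (Suc k)
  then show ?case
    by (cases j) auto
qed simp

lemma Ck_on_partials_exist: "Ck_on 1 f upper \<Longrightarrow> 0 < t \<Longrightarrow> partials_exist f x y t"
  by (simp add: One_nat_def Ck_on.simps(2)[of 0])

declare Ck_on.simps [simp del]

lemma Ck_on_pdx: "Ck_on (Suc k) f S \<Longrightarrow> Ck_on k (pdx f) S"
  and Ck_on_pdy: "Ck_on (Suc k) f S \<Longrightarrow> Ck_on k (pdy f) S"
  and Ck_on_pdt: "Ck_on (Suc k) f S \<Longrightarrow> Ck_on k (pdt f) S"
  by (simp_all add: Ck_on.simps)

lemma continuous_on_cong_upper:
  assumes "eq_on_upper f g" "continuous_on upper (\<lambda>(x, y, t). f x y t)"
  shows "continuous_on upper (\<lambda>(x, y, t). g x y t)"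
  using assms(2) by (rule continuous_on_cong[THEN iffD1, OF refl, rotated]) (use assms(1) in \<open>auto simp: eq_on_upper_def\<close>)

lemma Ck_on_cong_upper: "eq_on_upper f g \<Longrightarrow> Ck_on k f upper \<Longrightarrow> Ck_on k g upper"
proof (induction k arbitrary: f g)
  case 0
  then show ?case
    by (simp add: Ck_on.simps continuous_on_cong_upper)
next
  case (Suc k)
  have "continuous_on upper (\<lambda>(x, y, t). g x y t)"
    using Suc.prems Ck_on_continuous continuous_on_cong_upper by blast
  moreover have "\<forall>(x, y, t) \<in> upper. partials_exist g x y t"
    using Suc.prems partials_exist_cong_upper[OF Suc.prems(1)] by (auto simp: Ck_on.simps)
  moreover have "Ck_on k (pdx g) upper" "Ck_on k (pdy g) upper" "Ck_on k (pdt g) upper"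
    using Suc.IH[OF eq_on_upper_pdx[OF Suc.prems(1)]] Suc.IH[OF eq_on_upper_pdy[OF Suc.prems(1)]]
      Suc.IH[OF eq_on_upper_pdt[OF Suc.prems(1)]] Suc.prems(2) by (simp_all add: Ck_on.simps)
  ultimately show ?case
    by (simp add: Ck_on.simps)
qed

lemma Ck_on_lincomb:
  "Ck_on k f upper \<Longrightarrow> Ck_on k g upper \<Longrightarrow> Ck_on k (\<lambda>x y t. a * f x y t + b * g x y t) upper"
proof (induction k arbitrary: f g)
  case 0
  then show ?case
    by (auto simp: Ck_on.simps case_prod_beta intro!: continuous_intros)
next
  case (Suc k)
  let ?h = "\<lambda>x y t. a * f x y t + b * g x y t"
  have partials: "partials_exist f x y t" "partials_exist g x y t" if "0 < t" for x y t
    using Suc.prems that unfolding Ck_on.simps by auto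
  have "continuous_on upper (\<lambda>(x, y, t). ?h x y t)"
    using Suc.prems[THEN Ck_on_continuous] by (auto simp: case_prod_beta intro!: continuous_intros)
  moreover have "\<forall>(x, y, t) \<in> upper. partials_exist ?h x y t"
    using partials by auto
  moreover have "Ck_on k (pdx ?h) upper"
    by (rule Ck_on_cong_upper[OF _ Suc.IH[OF Suc.prems[THEN Ck_on_pdx]]])
       (use partials in \<open>auto intro!: eq_on_upperI\<close>)
  moreover have "Ck_on k (pdy ?h) upper"
    by (rule Ck_on_cong_upper[OF _ Suc.IH[OF Suc.prems[THEN Ck_on_pdy]]])
       (use partials in \<open>auto intro!: eq_on_upperI\<close>)
  moreover have "Ck_on k (pdt ?h) upper"
    by (rule Ck_on_cong_upper[OF _ Suc.IH[OF Suc.prems[THEN Ck_on_pdt]]])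
       (use partials in \<open>auto intro!: eq_on_upperI\<close>)
  ultimately show ?case
    by (simp add: Ck_on.simps)
qed

lemma Ck_on_add: "Ck_on k f upper \<Longrightarrow> Ck_on k g upper \<Longrightarrow> Ck_on k (\<lambda>x y t. f x y t + g x y t) upper"
  using Ck_on_lincomb[of k f g 1 1] by simp

lemma Ck_on_diff: "Ck_on k f upper \<Longrightarrow> Ck_on k g upper \<Longrightarrow> Ck_on k (\<lambda>x y t. f x y t - g x y t) upper"
  using Ck_on_lincomb[of k f g 1 "-1"] by simp

lemma continuous_on_upper_slice:
  assumes "continuous_on upper (\<lambda>(x, y, t). h x y t)" "continuous_on A (\<lambda>z. (e1 z, e2 z, e3 z))"
    and "(\<lambda>z. (e1 z, e2 z, e3 z)) ` A \<subseteq> upper"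
  shows "continuous_on A (\<lambda>z. h (e1 z) (e2 z) (e3 z))"
  using continuous_on_compose2[OF assms] by simp

lemma pdt_pdx_commute:
  assumes f: "Ck_on 2 f upper"
  shows "eq_on_upper (pdt (pdx f)) (pdx (pdt f))"
proof (rule eq_on_upperI)
  fix x y t :: real assume t: "0 < t"
  have "Ck_on 1 f upper" "Ck_on 1 (pdx f) upper" "Ck_on 0 (pdt (pdx f)) upper"
    using f Ck_on_le Ck_on_pdx Ck_on_pdt by (auto simp: numeral_2_eq_2)
  note smooth = this
  have "((\<lambda>s. pdt f s y t) has_real_derivative pdt (pdx f) x y t) (at x)"
  proof (rule mixed_partials_commute[where g="\<lambda>a b. f a y b" and gu="\<lambda>a b. pdx f a y b"
        and gv="\<lambda>a b. pdt f a y b" and guv="\<lambda>a b. pdt (pdx f) a y b" and d=t])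
    fix a b :: real assume "\<bar>a - x\<bar> < t" "\<bar>b - t\<bar> < t"
    then have "0 < b" by auto
    then show "((\<lambda>s. f s y b) has_real_derivative pdx f a y b) (at a)"
      and "((\<lambda>s. f a y s) has_real_derivative pdt f a y b) (at b)"
      and "((\<lambda>s. pdx f a y s) has_real_derivative pdt (pdx f) a y b) (at b)"
      using smooth by (simp_all add: has_real_derivative_pdx has_real_derivative_pdt Ck_on_partials_exist)
  next
    have "continuous_on ({x-t<..<x+t} \<times> {t-t<..<t+t}) (\<lambda>z. pdt (pdx f) (fst z) y (snd z))"
      by (rule continuous_on_upper_slice[OF Ck_on_continuous[OF smooth(3)]]) (auto intro!: continuous_intros)
    then show "continuous_on ({x-t<..<x+t} \<times> {t-t<..<t+t}) (\<lambda>(a, b). pdt (pdx f) a y b)"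
      by (simp add: case_prod_beta)
  qed (use t in auto)
  then show "pdt (pdx f) x y t = pdx (pdt f) x y t"
    unfolding pdx_def[of "pdt f"] by (rule DERIV_imp_deriv[symmetric])
qed

lemma pdt_pdy_commute:
  assumes f: "Ck_on 2 f upper"
  shows "eq_on_upper (pdt (pdy f)) (pdy (pdt f))"
proof (rule eq_on_upperI)
  fix x y t :: real assume t: "0 < t"
  have "Ck_on 1 f upper" "Ck_on 1 (pdy f) upper" "Ck_on 0 (pdt (pdy f)) upper"
    using f Ck_on_le Ck_on_pdy Ck_on_pdt by (auto simp: numeral_2_eq_2)
  note smooth = this
  have "((\<lambda>s. pdt f x s t) has_real_derivative pdt (pdy f) x y t) (at y)"
  proof (rule mixed_partials_commute[where g="\<lambda>a b. f x a b" and gu="\<lambda>a b. pdy f x a b"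
        and gv="\<lambda>a b. pdt f x a b" and guv="\<lambda>a b. pdt (pdy f) x a b" and d=t])
    fix a b :: real assume "\<bar>a - y\<bar> < t" "\<bar>b - t\<bar> < t"
    then have "0 < b" by auto
    then show "((\<lambda>s. f x s b) has_real_derivative pdy f x a b) (at a)"
      and "((\<lambda>s. f x a s) has_real_derivative pdt f x a b) (at b)"
      and "((\<lambda>s. pdy f x a s) has_real_derivative pdt (pdy f) x a b) (at b)"
      using smooth by (simp_all add: has_real_derivative_pdy has_real_derivative_pdt Ck_on_partials_exist)
  next
    have "continuous_on ({y-t<..<y+t} \<times> {t-t<..<t+t}) (\<lambda>z. pdt (pdy f) x (fst z) (snd z))"
      by (rule continuous_on_upper_slice[OF Ck_on_continuous[OF smooth(3)]]) (auto intro!: continuous_intros)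
    then show "continuous_on ({y-t<..<y+t} \<times> {t-t<..<t+t}) (\<lambda>(a, b). pdt (pdy f) x a b)"
      by (simp add: case_prod_beta)
  qed (use t in auto)
  then show "pdt (pdy f) x y t = pdy (pdt f) x y t"
    unfolding pdy_def[of "pdt f"] by (rule DERIV_imp_deriv[symmetric])
qed

lemma pdy_pdx_commute:
  assumes f: "Ck_on 2 f upper"
  shows "eq_on_upper (pdy (pdx f)) (pdx (pdy f))"
proof (rule eq_on_upperI)
  fix x y t :: real assume t: "0 < t"
  have "Ck_on 1 f upper" "Ck_on 1 (pdx f) upper" "Ck_on 0 (pdy (pdx f)) upper"
    using f Ck_on_le Ck_on_pdx Ck_on_pdy by (auto simp: numeral_2_eq_2)
  note smooth = this
  have "((\<lambda>s. pdy f s y t) has_real_derivative pdy (pdx f) x y t) (at x)"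
  proof (rule mixed_partials_commute[where g="\<lambda>a b. f a b t" and gu="\<lambda>a b. pdx f a b t"
        and gv="\<lambda>a b. pdy f a b t" and guv="\<lambda>a b. pdy (pdx f) a b t" and d=1])
    fix a b :: real
    show "((\<lambda>s. f s b t) has_real_derivative pdx f a b t) (at a)"
      and "((\<lambda>s. f a s t) has_real_derivative pdy f a b t) (at b)"
      and "((\<lambda>s. pdx f a s t) has_real_derivative pdy (pdx f) a b t) (at b)"
      using smooth t by (simp_all add: has_real_derivative_pdx has_real_derivative_pdy Ck_on_partials_exist)
  next
    have "continuous_on ({x-1<..<x+1} \<times> {y-1<..<y+1}) (\<lambda>z. pdy (pdx f) (fst z) (snd z) t)"
      by (rule continuous_on_upper_slice[OF Ck_on_continuous[OF smooth(3)]]) (use t in \<open>auto intro!: continuous_intros\<close>)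
    then show "continuous_on ({x-1<..<x+1} \<times> {y-1<..<y+1}) (\<lambda>(a, b). pdy (pdx f) a b t)"
      by (simp add: case_prod_beta)
  qed simp
  then show "pdy (pdx f) x y t = pdx (pdy f) x y t"
    unfolding pdx_def[of "pdy f"] by (rule DERIV_imp_deriv[symmetric])
qed

lemma pdy_pdy_pdx_commute:
  assumes "Ck_on 3 f upper"
  shows "eq_on_upper (pdy (pdy (pdx f))) (pdx (pdy (pdy f)))"
proof -
  have "Ck_on 2 f upper" "Ck_on 2 (pdy f) upper"
    using assms Ck_on_le Ck_on_pdy by (auto simp: numeral_3_eq_3 numeral_2_eq_2)
  then show ?thesis
    by (blast intro: eq_on_upper_trans eq_on_upper_pdy pdy_pdx_commute)
qed

lemma pdy_pdy_pdx_pdx_commute: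
  assumes "Ck_on 4 f upper"
  shows "eq_on_upper (pdy (pdy (pdx (pdx f)))) (pdx (pdx (pdy (pdy f))))"
proof -
  have "Ck_on 3 f upper" "Ck_on 3 (pdx f) upper"
    using assms Ck_on_le Ck_on_pdx by (auto simp: numeral_3_eq_3 numeral_Bit0)
  then show ?thesis
    by (blast intro: eq_on_upper_trans eq_on_upper_pdx pdy_pdy_pdx_commute)
qed

text \<open>
  These become simp rules only now: together with \<open>Ck_on.simps\<close> they make the simplifier loop.
  The simplifier rewrites \<open>Ck_on 1\<close> to \<open>Ck_on (Suc 0)\<close>, so proofs outside the locale below
  add \<open>eval_nat_numeral\<close> to put all orders into \<open>Suc\<close> form and let these rules chain.
\<close>
declare Ck_on_partials_exist [simp] Ck_on_pdx [simp] Ck_on_pdy [simp] Ck_on_pdt [simp]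

lemma pdy_pdx_swap [simp]: "Ck_on 2 f upper \<Longrightarrow> 0 < t \<Longrightarrow> pdy (pdx f) x y t = pdx (pdy f) x y t"
  by (rule eq_on_upperD[OF pdy_pdx_commute])

lemma eq_on_upper_pdxI:
  assumes "eq_on_upper f g" "\<And>x y t. 0 < t \<Longrightarrow> pdx g x y t = h x y t"
  shows "eq_on_upper (pdx f) h"
  using eq_on_upper_pdx[OF assms(1)] assms(2) by (simp add: eq_on_upper_def)

lemma eq_on_upper_pdyI:
  assumes "eq_on_upper f g" "\<And>x y t. 0 < t \<Longrightarrow> pdy g x y t = h x y t"
  shows "eq_on_upper (pdy f) h"
  using eq_on_upper_pdy[OF assms(1)] assms(2) by (simp add: eq_on_upper_def)

lemma eq_on_upper_pdtI:
  assumes "eq_on_upper f g" "\<And>x y t. 0 < t \<Longrightarrow> pdt g x y t = h x y t"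
  shows "eq_on_upper (pdt f) h"
  using eq_on_upper_pdt[OF assms(1)] assms(2) by (simp add: eq_on_upper_def)

lemma pdt_pdx_eqI:
  "Ck_on 2 f upper \<Longrightarrow> eq_on_upper (pdt f) g \<Longrightarrow> (\<And>x y t. 0 < t \<Longrightarrow> pdx g x y t = h x y t) \<Longrightarrow>
    eq_on_upper (pdt (pdx f)) h"
  by (rule eq_on_upper_trans[OF pdt_pdx_commute eq_on_upper_pdxI])

lemma pdt_pdy_eqI:
  "Ck_on 2 f upper \<Longrightarrow> eq_on_upper (pdt f) g \<Longrightarrow> (\<And>x y t. 0 < t \<Longrightarrow> pdy g x y t = h x y t) \<Longrightarrow>
    eq_on_upper (pdt (pdy f)) h"
  by (rule eq_on_upper_trans[OF pdt_pdy_commute eq_on_upper_pdyI])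

lemma Ck_on_lap [simp]: "Ck_on (Suc (Suc k)) f upper \<Longrightarrow> Ck_on k (lap f) upper"
  by (simp add: lap_def Ck_on_add)

lemma pdt_lap [simp]:
  assumes "Ck_on 3 f upper" "0 < t"
  shows "pdt (lap f) x y t = lap (pdt f) x y t"
proof -
  have "Ck_on 2 f upper" "Ck_on 2 (pdx f) upper" "Ck_on 2 (pdy f) upper"
    using assms(1) Ck_on_le by (auto simp: numeral_3_eq_3)
  then have xx: "eq_on_upper (pdt (pdx (pdx f))) (pdx (pdx (pdt f)))"
    and yy: "eq_on_upper (pdt (pdy (pdy f))) (pdy (pdy (pdt f)))"
    by (auto intro: eq_on_upper_trans[OF pdt_pdx_commute eq_on_upper_pdx[OF pdt_pdx_commute]]
                    eq_on_upper_trans[OF pdt_pdy_commute eq_on_upper_pdy[OF pdt_pdy_commute]])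
  from assms show ?thesis
    by (simp add: lap_def eval_nat_numeral eq_on_upperD[OF xx] eq_on_upperD[OF yy])
qed

lemma lap_lap:
  assumes "Ck_on 4 f upper" "0 < t"
  shows "lap (lap f) x y t =
    pdx (pdx (pdx (pdx f))) x y t + 2 * pdx (pdx (pdy (pdy f))) x y t + pdy (pdy (pdy (pdy f))) x y t"
proof -
  have x: "eq_on_upper (pdx (lap f)) (\<lambda>x y t. pdx (pdx (pdx f)) x y t + pdx (pdy (pdy f)) x y t)"
    and y: "eq_on_upper (pdy (lap f)) (\<lambda>x y t. pdy (pdx (pdx f)) x y t + pdy (pdy (pdy f)) x y t)"
    using assms(1) Ck_on_le[OF assms(1), of 3] by (auto intro!: eq_on_upperI simp: lap_def eval_nat_numeral)
  from assms show ?thesis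
    by (simp add: lap_def[of "lap f"] eval_nat_numeral eq_on_upperD[OF eq_on_upper_pdx[OF x]]
        eq_on_upperD[OF eq_on_upper_pdy[OF y]] eq_on_upperD[OF pdy_pdy_pdx_pdx_commute])
qed

lemma hyp_op_hyp_op:
  assumes "Ck_on 4 f upper" "0 < t"
  shows "hyp_op (hyp_op f) x y t =
    pdx (pdx (pdx (pdx f))) x y t - 2 * pdx (pdx (pdy (pdy f))) x y t + pdy (pdy (pdy (pdy f))) x y t"
proof -
  have x: "eq_on_upper (pdx (hyp_op f)) (\<lambda>x y t. pdx (pdx (pdx f)) x y t - pdx (pdy (pdy f)) x y t)"
    and y: "eq_on_upper (pdy (hyp_op f)) (\<lambda>x y t. pdy (pdx (pdx f)) x y t - pdy (pdy (pdy f)) x y t)"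
    using assms(1) Ck_on_le[OF assms(1), of 3] by (auto intro!: eq_on_upperI simp: hyp_op_def eval_nat_numeral)
  from assms show ?thesis
    by (simp add: hyp_op_def[of "hyp_op f"] eval_nat_numeral eq_on_upperD[OF eq_on_upper_pdx[OF x]]
        eq_on_upperD[OF eq_on_upper_pdy[OF y]] eq_on_upperD[OF pdy_pdy_pdx_pdx_commute])
qed

lemma eq_on_upper_scaled_derivatives:
  assumes "eq_on_upper f (\<lambda>x y t. c * g x y t)" "Ck_on 2 g upper" "0 < t"
  shows "pdt f x y t = c * pdt g x y t" "pdt (pdt f) x y t = c * pdt (pdt g) x y t"
    and "lap f x y t = c * lap g x y t"
proof -
  have g: "Ck_on 1 g upper"
    using assms(2) Ck_on_le by simp
  have ft: "eq_on_upper (pdt f) (\<lambda>x y t. c * pdt g x y t)"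
    using g by (intro eq_on_upper_pdtI[OF assms(1)]) simp
  have fx: "eq_on_upper (pdx f) (\<lambda>x y t. c * pdx g x y t)"
    using g by (intro eq_on_upper_pdxI[OF assms(1)]) simp
  have fy: "eq_on_upper (pdy f) (\<lambda>x y t. c * pdy g x y t)"
    using g by (intro eq_on_upper_pdyI[OF assms(1)]) simp
  from assms(2,3) show "lap f x y t = c * lap g x y t"
    by (simp add: lap_def eval_nat_numeral eq_on_upperD[OF eq_on_upper_pdx[OF fx]]
        eq_on_upperD[OF eq_on_upper_pdy[OF fy]] distrib_left)
  from assms(2,3) show "pdt (pdt f) x y t = c * pdt (pdt g) x y t"
    by (simp add: eval_nat_numeral eq_on_upperD[OF eq_on_upper_pdt[OF ft]])
  from assms(3) show "pdt f x y t = c * pdt g x y t"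
    by (rule eq_on_upperD[OF ft])
qed

section \<open>The transformed system\<close>

locale transformed_system =
  fixes a :: real and lam :: "real \<Rightarrow> real" and p r s q :: "real \<Rightarrow> real \<Rightarrow> real \<Rightarrow> real"
  assumes smooth: "Ck_on 4 p upper" "Ck_on 4 r upper" "Ck_on 4 s upper" "Ck_on 4 q upper"
    and lam_differentiable [simp]: "\<And>t. 0 < t \<Longrightarrow> lam differentiable (at t)"
    and lam'_differentiable [simp]: "\<And>t. 0 < t \<Longrightarrow> deriv lam differentiable (at t)"
    and p_t: "eq_on_upper (pdt p) (\<lambda>x y t. - a * (pdx r x y t + pdy s x y t))"
    and r_t: "eq_on_upper (pdt r) (\<lambda>x y t. - a * (pdx p x y t + pdy q x y t) - lam t * r x y t)"
    and s_t: "eq_on_upper (pdt s) (\<lambda>x y t. - a * (pdy p x y t + pdx q x y t) - lam t * s x y t)"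
    and q_t: "eq_on_upper (pdt q) (\<lambda>x y t. - a * (pdx s x y t + pdy r x y t) - lam t * (2 * q x y t))"
begin

lemma smooth_le [simp]:
  "j \<le> 4 \<Longrightarrow> Ck_on j p upper" "j \<le> 4 \<Longrightarrow> Ck_on j r upper"
  "j \<le> 4 \<Longrightarrow> Ck_on j s upper" "j \<le> 4 \<Longrightarrow> Ck_on j q upper"
  using smooth Ck_on_le by blast+

abbreviation Q :: "real \<Rightarrow> real \<Rightarrow> real \<Rightarrow> real" where
  "Q \<equiv> pdx (pdy q)"

definition W :: "real \<Rightarrow> real \<Rightarrow> real \<Rightarrow> real" where
  "W = (\<lambda>x y t. pdx (pdx (pdy s)) x y t + pdx (pdy (pdy r)) x y t)"

definition P :: "real \<Rightarrow> real \<Rightarrow> real \<Rightarrow> real" where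
  "P = (\<lambda>x y t. pdt (pdt p) x y t + lam t * pdt p x y t - a^2 * lap p x y t)"

lemma partials_exist_W [simp]: "0 < t \<Longrightarrow> partials_exist W x y t"
  by (simp add: W_def)

lemma P_eq_Q: "eq_on_upper P (\<lambda>x y t. 2 * a^2 * Q x y t)"
proof (rule eq_on_upperI)
  fix x y t :: real assume t: "0 < t"
  have r_x: "eq_on_upper (pdt (pdx r))
      (\<lambda>x y t. - a * (pdx (pdx p) x y t + pdx (pdy q) x y t) - lam t * pdx r x y t)"
    by (rule pdt_pdx_eqI[OF _ r_t]) simp_all
  have s_y: "eq_on_upper (pdt (pdy s))
      (\<lambda>x y t. - a * (pdy (pdy p) x y t + pdx (pdy q) x y t) - lam t * pdy s x y t)"
    by (rule pdt_pdy_eqI[OF _ s_t]) simp_all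
  have "pdt (pdt p) x y t = pdt (\<lambda>x y t. - a * (pdx r x y t + pdy s x y t)) x y t"
    by (rule eq_on_upperD[OF eq_on_upper_pdt[OF p_t] t])
  with t show "P x y t = 2 * a^2 * Q x y t"
    by (simp add: P_def eq_on_upperD[OF r_x] eq_on_upperD[OF s_y] eq_on_upperD[OF p_t] lap_def
        algebra_simps power2_eq_square)
qed

lemma Q_t: "eq_on_upper (pdt Q) (\<lambda>x y t. - a * W x y t - lam t * (2 * Q x y t))"
proof -
  have q_y: "eq_on_upper (pdt (pdy q))
      (\<lambda>x y t. - a * (pdx (pdy s) x y t + pdy (pdy r) x y t) - lam t * (2 * pdy q x y t))"
    by (rule pdt_pdy_eqI[OF _ q_t]) simp_all
  show ?thesis
    by (rule pdt_pdx_eqI[OF _ q_y]) (simp_all add: W_def)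
qed

lemma W_t:
  "eq_on_upper (pdt W)
    (\<lambda>x y t. - 2 * a * pdx (pdx (pdy (pdy p))) x y t - a * lap Q x y t - lam t * W x y t)"
proof -
  have s_y: "eq_on_upper (pdt (pdy s))
      (\<lambda>x y t. - a * (pdy (pdy p) x y t + pdx (pdy q) x y t) - lam t * pdy s x y t)"
    by (rule pdt_pdy_eqI[OF _ s_t]) simp_all
  have s_xy: "eq_on_upper (pdt (pdx (pdy s)))
      (\<lambda>x y t. - a * (pdx (pdy (pdy p)) x y t + pdx (pdx (pdy q)) x y t) - lam t * pdx (pdy s) x y t)"
    by (rule pdt_pdx_eqI[OF _ s_y]) simp_all
  have s_xxy: "eq_on_upper (pdt (pdx (pdx (pdy s))))
      (\<lambda>x y t. - a * (pdx (pdx (pdy (pdy p))) x y t + pdx (pdx (pdx (pdy q))) x y t)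
               - lam t * pdx (pdx (pdy s)) x y t)"
    by (rule pdt_pdx_eqI[OF _ s_xy]) simp_all
  have r_y: "eq_on_upper (pdt (pdy r))
      (\<lambda>x y t. - a * (pdx (pdy p) x y t + pdy (pdy q) x y t) - lam t * pdy r x y t)"
    by (rule pdt_pdy_eqI[OF _ r_t]) simp_all
  have r_yy: "eq_on_upper (pdt (pdy (pdy r)))
      (\<lambda>x y t. - a * (pdx (pdy (pdy p)) x y t + pdy (pdy (pdy q)) x y t) - lam t * pdy (pdy r) x y t)"
    by (rule pdt_pdy_eqI[OF _ r_y]) simp_all
  have r_xyy: "eq_on_upper (pdt (pdx (pdy (pdy r))))
      (\<lambda>x y t. - a * (pdx (pdx (pdy (pdy p))) x y t + pdx (pdy (pdy (pdy q))) x y t)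
               - lam t * pdx (pdy (pdy r)) x y t)"
    by (rule pdt_pdx_eqI[OF _ r_yy]) simp_all
  show ?thesis
    by (rule eq_on_upperI) (simp add: W_def lap_def eq_on_upperD[OF s_xxy] eq_on_upperD[OF r_xyy]
        eq_on_upperD[OF pdy_pdy_pdx_commute] algebra_simps)
qed

lemma Q_equation:
  assumes "0 < t"
  shows "pdt (pdt Q) x y t + 3 * lam t * pdt Q x y t + 2 * ((lam t)^2 + deriv lam t) * Q x y t
           - a^2 * lap Q x y t = 2 * a^2 * pdx (pdx (pdy (pdy p))) x y t"
proof -
  have "pdt (pdt Q) x y t = pdt (\<lambda>x y t. - a * W x y t - lam t * (2 * Q x y t)) x y t"
    by (rule eq_on_upperD[OF eq_on_upper_pdt[OF Q_t] assms])
  with assms show ?thesis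
    by (simp add: eq_on_upperD[OF Q_t] eq_on_upperD[OF W_t] algebra_simps power2_eq_square)
qed

lemma P_equation:
  assumes "0 < t"
  shows "pdt (pdt P) x y t + 3 * lam t * pdt P x y t + 2 * ((lam t)^2 + deriv lam t) * P x y t
           - a^2 * lap P x y t = 4 * a^4 * pdx (pdx (pdy (pdy p))) x y t"
proof -
  have "Ck_on 2 Q upper"
    by simp
  note scaled = eq_on_upper_scaled_derivatives[OF P_eq_Q this assms]
  have "2 * a^2 * (pdt (pdt Q) x y t + 3 * lam t * pdt Q x y t + 2 * ((lam t)^2 + deriv lam t) * Q x y t
          - a^2 * lap Q x y t) = 4 * a^4 * pdx (pdx (pdy (pdy p))) x y t"
    using Q_equation[OF assms] by simp
  then show ?thesis
    by (simp add: scaled eq_on_upperD[OF P_eq_Q assms] algebra_simps)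
qed

lemma pdt_P:
  "eq_on_upper (pdt P) (\<lambda>x y t. pdt (pdt (pdt p)) x y t + deriv lam t * pdt p x y t
                               + lam t * pdt (pdt p) x y t - a^2 * lap (pdt p) x y t)"
  by (rule eq_on_upperI) (simp add: P_def)

lemma pdt_pdt_P:
  assumes "0 < t"
  shows "pdt (pdt P) x y t = pdt (pdt (pdt (pdt p))) x y t + deriv (deriv lam) t * pdt p x y t
           + 2 * deriv lam t * pdt (pdt p) x y t + lam t * pdt (pdt (pdt p)) x y t
           - a^2 * lap (pdt (pdt p)) x y t"
  using assms by (simp add: eq_on_upperD[OF eq_on_upper_pdt[OF pdt_P]] algebra_simps)

lemma lap_P:
  assumes "0 < t"
  shows "lap P x y t = lap (pdt (pdt p)) x y t + lam t * lap (pdt p) x y t - a^2 * lap (lap p) x y t"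
proof -
  have P_x: "eq_on_upper (pdx P)
      (\<lambda>x y t. pdx (pdt (pdt p)) x y t + lam t * pdx (pdt p) x y t - a^2 * pdx (lap p) x y t)"
    by (rule eq_on_upperI) (simp add: P_def)
  have P_y: "eq_on_upper (pdy P)
      (\<lambda>x y t. pdy (pdt (pdt p)) x y t + lam t * pdy (pdt p) x y t - a^2 * pdy (lap p) x y t)"
    by (rule eq_on_upperI) (simp add: P_def)
  from assms show ?thesis
    by (simp add: lap_def[of P] lap_def[of "pdt (pdt p)"] lap_def[of "pdt p"] lap_def[of "lap p"]
        eq_on_upperD[OF eq_on_upper_pdx[OF P_x]] eq_on_upperD[OF eq_on_upper_pdy[OF P_y]] algebra_simps)
qed

lemma fourth_order_equation:
  assumes "0 < t"
  shows "pdt (pdt (pdt (pdt p))) x y t =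
      - 4 * lam t * pdt (pdt (pdt p)) x y t
      + (2 * a^2 * lap (pdt (pdt p)) x y t - (5 * (lam t)^2 + 4 * deriv lam t) * pdt (pdt p) x y t)
      + (4 * a^2 * lam t * lap (pdt p) x y t
         - (5 * lam t * deriv lam t + 2 * (lam t)^3 + deriv (deriv lam) t) * pdt p x y t)
      - a^4 * hyp_op (hyp_op p) x y t + 2 * a^2 * ((lam t)^2 + deriv lam t) * lap p x y t"
proof -
  have P_xyt: "P x y t = pdt (pdt p) x y t + lam t * pdt p x y t - a^2 * lap p x y t"
    by (simp add: P_def)
  from P_equation[OF assms, of x y] show ?thesis
    by (simp add: P_xyt pdt_pdt_P[OF assms] eq_on_upperD[OF pdt_P assms] lap_P[OF assms]
        lap_lap[OF smooth(1) assms] hyp_op_hyp_op[OF smooth(1) assms] algebra_simps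
        power2_eq_square power3_eq_cube power4_eq_xxxx)
qed

end

theorem theorem5p1:
  fixes c :: real and lam :: "real \<Rightarrow> real"
    and fpp fpm fmp fmm :: "real \<Rightarrow> real \<Rightarrow> real \<Rightarrow> real"
  assumes c_pos: "c > 0"
    and lam_C2: "Ck_on1 2 lam {0<..}"
    and reg: "Ck_on 4 fpp (UNIV \<times> UNIV \<times> {0<..})" "Ck_on 4 fpm (UNIV \<times> UNIV \<times> {0<..})"
             "Ck_on 4 fmp (UNIV \<times> UNIV \<times> {0<..})" "Ck_on 4 fmm (UNIV \<times> UNIV \<times> {0<..})"
    and eq_pp: "\<And>x y t. t > 0 \<Longrightarrow> pdt fpp x y t =
        - (c/2) * pdx fpp x y t - (c/2) * pdy fpp x y t
        + lam t / 2 * (fmp x y t + fpm x y t - 2 * fpp x y t)"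
    and eq_pm: "\<And>x y t. t > 0 \<Longrightarrow> pdt fpm x y t =
        - (c/2) * pdx fpm x y t + (c/2) * pdy fpm x y t
        + lam t / 2 * (fmm x y t + fpp x y t - 2 * fpm x y t)"
    and eq_mp: "\<And>x y t. t > 0 \<Longrightarrow> pdt fmp x y t =
        (c/2) * pdx fmp x y t - (c/2) * pdy fmp x y t
        + lam t / 2 * (fpp x y t + fmm x y t - 2 * fmp x y t)"
    and eq_mm: "\<And>x y t. t > 0 \<Longrightarrow> pdt fmm x y t =
        (c/2) * pdx fmm x y t + (c/2) * pdy fmm x y t
        + lam t / 2 * (fpm x y t + fmp x y t - 2 * fmm x y t)"
  shows "\<forall>x y t. t > 0 \<longrightarrow>
    (let p = (\<lambda>x y t. fpp x y t + fpm x y t + fmp x y t + fmm x y t);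
         l = lam t; l1 = deriv lam t; l2 = deriv (deriv lam) t
     in pdt (pdt (pdt (pdt p))) x y t =
          - 4 * l * pdt (pdt (pdt p)) x y t
          + ((c^2/2) * lap (pdt (pdt p)) x y t - (5 * l^2 + 4 * l1) * pdt (pdt p) x y t)
          + (l * c^2 * lap (pdt p) x y t - (5 * l * l1 + 2 * l^3 + l2) * pdt p x y t)
          - (c^4/16) * hyp_op (hyp_op p) x y t
          + (c^2/2) * (l^2 + l1) * lap p x y t)"
proof -
  define p where "p = (\<lambda>x y t. fpp x y t + fpm x y t + fmp x y t + fmm x y t)"
  define r where "r = (\<lambda>x y t. fpp x y t + fpm x y t - fmp x y t - fmm x y t)"
  define s where "s = (\<lambda>x y t. fpp x y t - fpm x y t + fmp x y t - fmm x y t)"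
  define q where "q = (\<lambda>x y t. fpp x y t - fpm x y t - fmp x y t + fmm x y t)"
  have partials: "partials_exist fpp x y t" "partials_exist fpm x y t"
    "partials_exist fmp x y t" "partials_exist fmm x y t" if "0 < t" for x y t
    using reg[THEN Ck_on_le, of 1] that by simp_all
  interpret transformed_system "c/2" lam p r s q
  proof
    show "Ck_on 4 p upper" "Ck_on 4 r upper" "Ck_on 4 s upper" "Ck_on 4 q upper"
      unfolding p_def r_def s_def q_def by (intro Ck_on_add Ck_on_diff reg)+
    show "lam differentiable (at t)" "deriv lam differentiable (at t)" if "0 < t" for t
      using lam_C2 that by (simp_all add: numeral_2_eq_2)
  qed (auto intro!: eq_on_upperI simp: partials p_def r_def s_def q_def eq_pp eq_pm eq_mp eq_mm field_simps)
  show ?thesis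
    unfolding Let_def p_def[symmetric]
    using fourth_order_equation by (simp add: power_divide algebra_simps)
qed

end
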